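(* Let $4\le\beta\le n-2$ and let $\gamma_1,\gamma_2,\gamma_3,\gamma_4$ be positive integers with $\gamma_1+\gamma_2+\gamma_3+\gamma_4=n$ such that $\min(\gamma_i,\gamma_j)\ge 2$ for some $1\le i<j\le 4$. Then $\mathcal T_{(n),(\beta),(\gamma_1,\gamma_2,\gamma_3,\gamma_4)}$ has infinitely many $G$-orbits.
   Context: $\mathbb F$ is an infinite field of characteristic $\ne 2$. Equip $\mathbb F^{2n}$ (canonical basis $e_1,\ldots,e_{2n}$) with the symmetric bilinear form $(e_i,e_j)=\delta_{i,2n+1-j}$, and let $G={\rm O}_{2n}(\mathbb F)$ be its isometry group. A subspace $V$ is isotropic if $(V,V)=\{0\}$. For a sequence ${\bf a}=(\alpha_1,\ldots,\alpha_p)$ of positive integers with $\sum\alpha_j\le n$, $M_{\bf a}$ is the set of flags $V_1\subset\cdots\subset V_p$ in $\mathbb F^{2n}$ with $\dim V_j=\alpha_1+\cdots+\alpha_j$ and $V_p$ isotropic. $\mathcal T_{{\bf a},{\bf b},{\bf c}}=M_{\bf a}\times M_{\bf b}\times M_{\bf c}$ with the diagonal $G$-action. *)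

theory Defs
  imports Main
begin

text \<open>Vectors of F^(2n) are functions nat => F supported on {0..<2n}
 (coordinate i corresponds to basis vector e_(i+1)).\<close>

definition vecs :: "nat \<Rightarrow> (nat \<Rightarrow> 'a::field) set" where
  "vecs n = {v. \<forall>i. 2*n \<le> i \<longrightarrow> v i = 0}"

text \<open>(e_i, e_j) = delta_(i, 2n+1-j); in 0-based indices i pairs with 2n-1-i.\<close>
definition bform :: "nat \<Rightarrow> (nat \<Rightarrow> 'a::field) \<Rightarrow> (nat \<Rightarrow> 'a) \<Rightarrow> 'a" where
  "bform n u v = (\<Sum>i<2*n. u i * v (2*n - 1 - i))"

definition lincomb :: "(nat \<Rightarrow> 'a::field) list \<Rightarrow> 'a list \<Rightarrow> (nat \<Rightarrow> 'a)" where
  "lincomb vs cs = (\<lambda>k. \<Sum>j<length vs. cs ! j * (vs ! j) k)"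

definition lspan :: "(nat \<Rightarrow> 'a::field) list \<Rightarrow> (nat \<Rightarrow> 'a) set" where
  "lspan vs = {lincomb vs cs | cs. length cs = length vs}"

definition lin_indep :: "(nat \<Rightarrow> 'a::field) list \<Rightarrow> bool" where
  "lin_indep vs = (\<forall>cs. length cs = length vs \<and> lincomb vs cs = (\<lambda>_. 0)
                      \<longrightarrow> (\<forall>j<length vs. cs ! j = 0))"

definition subspace_dim :: "nat \<Rightarrow> (nat \<Rightarrow> 'a::field) set \<Rightarrow> nat \<Rightarrow> bool" where
  "subspace_dim n V k = (\<exists>vs. length vs = k \<and> set vs \<subseteq> vecs n \<and> lin_indep vs \<and> lspan vs = V)"

definition isotropic :: "nat \<Rightarrow> (nat \<Rightarrow> 'a::field) set \<Rightarrow> bool" where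
  "isotropic n V = (\<forall>u\<in>V. \<forall>v\<in>V. bform n u v = 0)"

definition flags :: "nat \<Rightarrow> nat list \<Rightarrow> (nat \<Rightarrow> 'a::field) set list set" where
  "flags n a = {Vs. length Vs = length a \<and>
      (\<forall>j<length a. subspace_dim n (Vs ! j) (sum_list (take (Suc j) a))) \<and>
      (\<forall>j. Suc j < length a \<longrightarrow> Vs ! j \<subseteq> Vs ! Suc j) \<and>
      isotropic n (last Vs)}"

definition mat_act :: "nat \<Rightarrow> (nat \<Rightarrow> nat \<Rightarrow> 'a::field) \<Rightarrow> (nat \<Rightarrow> 'a) \<Rightarrow> (nat \<Rightarrow> 'a)" where
  "mat_act n g v = (\<lambda>i. if i < 2*n then (\<Sum>j<2*n. g i j * v j) else 0)"

definition orth_group :: "nat \<Rightarrow> ((nat \<Rightarrow> 'a::field) \<Rightarrow> (nat \<Rightarrow> 'a)) set" where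
  "orth_group n = {mat_act n g | g. bij_betw (mat_act n g) (vecs n) (vecs n) \<and>
      (\<forall>u\<in>vecs n. \<forall>v\<in>vecs n. bform n (mat_act n g u) (mat_act n g v) = bform n u v)}"

definition flag_act :: "((nat \<Rightarrow> 'a) \<Rightarrow> (nat \<Rightarrow> 'a)) \<Rightarrow> (nat \<Rightarrow> 'a) set list \<Rightarrow> (nat \<Rightarrow> 'a) set list" where
  "flag_act g Vs = map (\<lambda>V. g ` V) Vs"

definition triple_space :: "nat \<Rightarrow> nat list \<Rightarrow> nat list \<Rightarrow> nat list
     \<Rightarrow> ((nat \<Rightarrow> 'a::field) set list \<times> (nat \<Rightarrow> 'a) set list \<times> (nat \<Rightarrow> 'a) set list) set" where
  "triple_space n a b c = flags n a \<times> flags n b \<times> flags n c"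

definition triple_orbits :: "nat \<Rightarrow> nat list \<Rightarrow> nat list \<Rightarrow> nat list
     \<Rightarrow> ((nat \<Rightarrow> 'a::field) set list \<times> (nat \<Rightarrow> 'a) set list \<times> (nat \<Rightarrow> 'a) set list) set set" where
  "triple_orbits n a b c =
     (\<lambda>(X, Y, Z). (\<lambda>g. (flag_act g X, flag_act g Y, flag_act g Z)) ` orth_group n)
       ` triple_space n a b c"

end

theory Submission
  imports Defs
begin

text \<open>
  We exhibit a one-parameter family of triples \<open>([L\<^sub>r], [W], Z)\<close>, \<open>r \<noteq> 0\<close>, in which only the
  Lagrangian \<open>L\<^sub>r\<close> varies. Everything happens in the span of the basis vectors \<open>e\<^sub>0, \<dots>, e\<^sub>5\<close>
  and their partners \<open>f\<^sub>0, \<dots>, f\<^sub>5\<close> under the form; the other basis vectors only pad the dimensions.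
  From a triple one builds, by sums, intersections and orthogonal complements, subspaces
  \<open>A\<^sub>1, A\<^sub>2, B\<^sub>1, B\<^sub>2\<close>, and considers the cross ratios
  \<open>(x\<^sub>1, y\<^sub>1)(x\<^sub>2, y\<^sub>2) / ((x\<^sub>1, y\<^sub>2)(x\<^sub>2, y\<^sub>1))\<close> with \<open>x\<^sub>k \<perp> A\<^sub>k\<close> and \<open>y\<^sub>k \<in> B\<^sub>k\<close>.
  Isometries carry these constructions along, so a cross ratio admitted by a triple is admitted
  by every triple in its orbit, while the triple with parameter \<open>r\<close> admits exactly \<open>(r - 1) / r\<close>.
  Hence the triples lie in pairwise different orbits, and there are infinitely many of them since
  the field is infinite.
\<close>

section \<open>Linear algebra on coordinate vectors\<close>

definition lin_subspace :: "(nat \<Rightarrow> 'a::field) set \<Rightarrow> bool" where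
  "lin_subspace X \<longleftrightarrow> (\<lambda>_. 0) \<in> X \<and> (\<forall>u\<in>X. \<forall>v\<in>X. (\<lambda>i. u i + v i) \<in> X)
     \<and> (\<forall>c. \<forall>u\<in>X. (\<lambda>i. c * u i) \<in> X)"

lemma lin_subspace_sum:
  assumes X: "lin_subspace X" and "finite J" "\<And>j. j \<in> J \<Longrightarrow> f j \<in> X"
  shows "(\<lambda>k. \<Sum>j\<in>J. f j k) \<in> X"
  using assms(2,3)
proof (induction J rule: finite_induct)
  case empty
  then show ?case using X by (simp add: lin_subspace_def)
next
  case (insert j J)
  have "\<forall>u\<in>X. \<forall>v\<in>X. (\<lambda>i. u i + v i) \<in> X"
    using X by (simp add: lin_subspace_def)
  then have "(\<lambda>k. f j k + (\<Sum>j\<in>J. f j k)) \<in> X"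
    using insert by simp
  then show ?case using insert.hyps by simp
qed

lemma lincomb_mem:
  assumes "lin_subspace X" "set vs \<subseteq> X"
  shows "lincomb vs cs \<in> X"
  unfolding lincomb_def
proof (rule lin_subspace_sum[OF assms(1)])
  fix j assume "j \<in> {..<length vs}"
  then have "vs ! j \<in> X" using assms(2) by auto
  then show "(\<lambda>k. cs ! j * (vs ! j) k) \<in> X"
    using assms(1) unfolding lin_subspace_def by blast
qed simp

lemma lin_subspace_vecs: "lin_subspace (vecs n)"
  by (simp add: lin_subspace_def vecs_def)

lemma subspace_dim_subset:
  assumes "subspace_dim n V k"
  shows "V \<subseteq> vecs n"
proof -
  obtain vs where "set vs \<subseteq> vecs n" "lspan vs = V"
    using assms unfolding subspace_dim_def by blast
  then show ?thesis unfolding lspan_def using lincomb_mem[OF lin_subspace_vecs] by blast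
qed

lemma lincomb_at_pivot:
  assumes "length cs = length vs"
    and "\<And>j. j < length vs \<Longrightarrow> (vs ! j) p = (if j = k then 1 else 0)" and "k < length vs"
  shows "lincomb vs cs p = cs ! k"
proof -
  have "lincomb vs cs p = (\<Sum>j<length vs. if j = k then cs ! j else 0)"
    unfolding lincomb_def using assms(2) by (intro sum.cong) auto
  then show ?thesis using assms(3) by simp
qed

lemma lspan_pivots:
  fixes vs :: "(nat \<Rightarrow> 'a::field) list"
  assumes X: "lin_subspace X" and vs: "set vs \<subseteq> X" and len: "length ps = length vs"
    and piv: "\<And>j k. j < length vs \<Longrightarrow> k < length vs \<Longrightarrow> (vs ! j) (ps ! k) = (if j = k then 1 else 0)"
    and det: "\<And>v. v \<in> X \<Longrightarrow> \<forall>p\<in>set ps. v p = 0 \<Longrightarrow> v = (\<lambda>_. 0)"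
  shows "X \<subseteq> lspan vs"
proof
  fix v assume v: "v \<in> X"
  define cs where "cs = map (\<lambda>k. v (ps ! k)) [0..<length vs]"
  have lcs: "length cs = length vs" by (simp add: cs_def)
  define w where "w = (\<lambda>i. (-1) * lincomb vs cs i)"
  define d where "d = (\<lambda>i. v i + w i)"
  have "w \<in> X"
    using X lincomb_mem[OF X vs] unfolding w_def lin_subspace_def by blast
  then have "d \<in> X"
    using X v unfolding d_def lin_subspace_def by blast
  moreover have "\<forall>p\<in>set ps. d p = 0"
  proof
    fix p assume "p \<in> set ps"
    then obtain k where k: "k < length vs" "p = ps ! k" using len by (auto simp: in_set_conv_nth)
    then show "d p = 0"
      using lincomb_at_pivot[OF lcs piv[OF _ k(1)] k(1)] by (simp add: d_def w_def cs_def)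
  qed
  ultimately have "d = (\<lambda>_. 0)" by (rule det)
  then have "v = lincomb vs cs" by (auto simp: d_def w_def fun_eq_iff)
  then show "v \<in> lspan vs" unfolding lspan_def using lcs by blast
qed

lemma subspace_dim_pivots:
  fixes vs :: "(nat \<Rightarrow> 'a::field) list"
  assumes X: "lin_subspace X" "X \<subseteq> vecs n" and vs: "set vs \<subseteq> X"
    and len: "length ps = length vs"
    and piv: "\<And>j k. j < length vs \<Longrightarrow> k < length vs \<Longrightarrow> (vs ! j) (ps ! k) = (if j = k then 1 else 0)"
    and det: "\<And>v. v \<in> X \<Longrightarrow> \<forall>p\<in>set ps. v p = 0 \<Longrightarrow> v = (\<lambda>_. 0)"
  shows "subspace_dim n X (length vs)"
proof -
  have "lin_indep vs"
    unfolding lin_indep_def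
  proof (intro allI impI)
    fix cs :: "'a list" and j
    assume cs: "length cs = length vs \<and> lincomb vs cs = (\<lambda>_. 0)" and j: "j < length vs"
    then have "lincomb vs cs (ps ! j) = cs ! j" by (intro lincomb_at_pivot piv) auto
    then show "cs ! j = 0" using cs by simp
  qed
  moreover have "lspan vs = X"
    using lspan_pivots[OF X(1) vs len piv det] lincomb_mem[OF X(1) vs] unfolding lspan_def by blast
  ultimately show ?thesis
    unfolding subspace_dim_def using vs X(2) by (intro exI[of _ vs]) auto
qed

section \<open>Coordinates adapted to the form\<close>

definition dual_idx :: "nat \<Rightarrow> nat \<Rightarrow> nat" where
  "dual_idx n i = 2*n - 1 - i"

definition unit_vec :: "nat \<Rightarrow> nat \<Rightarrow> 'a::field" where
  "unit_vec k = (\<lambda>i. if i = k then 1 else 0)"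

text \<open>\<open>core_vec n xs ys = \<Sum>\<^sub>a<6 xs!a e\<^sub>a + ys!a f\<^sub>a\<close>, where \<open>f\<^sub>a\<close> is the unit vector at the coordinate
  \<open>dual_idx n a\<close> paired with \<open>a\<close> by the form.\<close>

definition core_vec :: "nat \<Rightarrow> 'a list \<Rightarrow> 'a list \<Rightarrow> nat \<Rightarrow> 'a::field" where
  "core_vec n xs ys = (\<lambda>i. if i < 6 then xs ! i
     else if 2*n - 6 \<le> i \<and> i < 2*n then ys ! dual_idx n i else 0)"

lemma dual_idx_dual_idx [simp]: "i < 2*n \<Longrightarrow> dual_idx n (dual_idx n i) = i"
  by (simp add: dual_idx_def)

lemma dual_idx_less [simp]: "i < 2*n \<Longrightarrow> dual_idx n i < 2*n"
  by (simp add: dual_idx_def)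

lemma index_cases:
  assumes "6 \<le> n"
  obtains "i < 6" | "6 \<le> i" "i < 2*n - 6" | a where "a < 6" "i = dual_idx n a" | "2*n \<le> i"
proof -
  consider "i < 6" | "6 \<le> i" "i < 2*n - 6" | "2*n - 6 \<le> i" "i < 2*n" | "2*n \<le> i"
    by linarith
  then show ?thesis
  proof cases
    case 3
    then have "dual_idx n i < 6" "i = dual_idx n (dual_idx n i)" using assms by (auto simp: dual_idx_def)
    then show ?thesis using that by blast
  qed (use that in auto)
qed

lemma less_6_cases: "(a::nat) < 6 \<Longrightarrow> a = 0 \<or> a = 1 \<or> a = 2 \<or> a = 3 \<or> a = 4 \<or> a = 5"
  by auto

lemma less_4_cases: "(a::nat) < 4 \<Longrightarrow> a = 0 \<or> a = 1 \<or> a = 2 \<or> a = 3"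
  by auto

lemma core_vec_low [simp]: "i < 6 \<Longrightarrow> core_vec n xs ys i = xs ! i"
  by (simp add: core_vec_def)

lemma core_vec_dual [simp]: "6 \<le> n \<Longrightarrow> a < 6 \<Longrightarrow> core_vec n xs ys (dual_idx n a) = ys ! a"
  by (auto simp: core_vec_def dual_idx_def)

lemma core_vec_mid: "6 \<le> i \<Longrightarrow> i < 2*n - 6 \<Longrightarrow> core_vec n xs ys i = 0"
  by (simp add: core_vec_def)

lemma core_vec_vecs: "6 \<le> n \<Longrightarrow> core_vec n xs ys \<in> vecs n"
  by (simp add: core_vec_def vecs_def)

lemma core_vec_add:
  assumes "length xs = 6" "length xs' = 6" "length ys = 6" "length ys' = 6"
  shows "(\<lambda>i. core_vec n xs ys i + core_vec n xs' ys' i)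
    = core_vec n (map2 (+) xs xs') (map2 (+) ys ys')"
  using assms by (auto simp: core_vec_def dual_idx_def fun_eq_iff)

lemma unit_vec_low [simp]: "i < 6 \<Longrightarrow> 6 \<le> k \<Longrightarrow> unit_vec k i = 0"
  by (simp add: unit_vec_def)

lemma unit_vec_dual_idx [simp]: "6 \<le> n \<Longrightarrow> a < 6 \<Longrightarrow> k < n \<Longrightarrow> unit_vec k (dual_idx n a) = 0"
  by (simp add: unit_vec_def dual_idx_def)

lemma unit_vec_vecs: "k < 2*n \<Longrightarrow> unit_vec k \<in> vecs n"
  by (simp add: unit_vec_def vecs_def)

lemma sum_lessThan_6: "(\<Sum>a<6::nat. f a) = f 0 + f 1 + f 2 + f 3 + f 4 + (f 5 :: 'a::comm_monoid_add)"
  by (simp add: eval_nat_numeral add.assoc)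

lemma bform_sym: "bform n u v = bform n v u"
proof -
  have "bform n u v = (\<Sum>i<2*n. u (dual_idx n i) * v (dual_idx n (dual_idx n i)))"
    unfolding bform_def dual_idx_def
    by (rule sum.reindex_bij_witness[of _ "\<lambda>i. 2*n-1-i" "\<lambda>i. 2*n-1-i"]) auto
  also have "\<dots> = bform n v u"
    unfolding bform_def by (intro sum.cong) (auto simp: mult.commute dual_idx_def)
  finally show ?thesis .
qed

lemma bform_unit_vec: "k < 2*n \<Longrightarrow> bform n u (unit_vec k) = u (dual_idx n k)"
proof -
  assume k: "k < 2*n"
  have "bform n u (unit_vec k) = (\<Sum>i<2*n. if i = dual_idx n k then u i else 0)"
    unfolding bform_def unit_vec_def using k by (intro sum.cong) (auto simp: dual_idx_def)
  then show ?thesis using k by simp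
qed

lemma bform_unit_vec_left: "k < 2*n \<Longrightarrow> bform n (unit_vec k) v = v (dual_idx n k)"
  by (simp add: bform_sym[of n "unit_vec k"] bform_unit_vec)

lemma bform_split:
  assumes "6 \<le> n"
  shows "bform n u v = (\<Sum>a<6. u a * v (dual_idx n a) + u (dual_idx n a) * v a)
    + (\<Sum>i\<in>{6..<2*n-6}. u i * v (dual_idx n i))"
proof -
  have split: "{..<2*n} = {..<6} \<union> {6..<2*n-6} \<union> {2*n-6..<2*n}" using assms by auto
  have "(\<Sum>i\<in>{2*n-6..<2*n}. u i * v (dual_idx n i)) = (\<Sum>a<6. u (dual_idx n a) * v a)"
    using assms
    by (intro sum.reindex_bij_witness[of _ "dual_idx n" "dual_idx n"]) (auto simp: dual_idx_def)
  moreover have "bform n u v = (\<Sum>i<6. u i * v (dual_idx n i)) + (\<Sum>i\<in>{6..<2*n-6}. u i * v (dual_idx n i))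
       + (\<Sum>i\<in>{2*n-6..<2*n}. u i * v (dual_idx n i))"
    unfolding bform_def split dual_idx_def[symmetric] using assms
    by (subst sum.union_disjoint, auto)+
  ultimately show ?thesis by (simp add: sum.distrib algebra_simps)
qed

text \<open>Coordinates \<open>n \<le> i < 2n - 6\<close> are paired with the padding coordinates below \<open>n\<close>, so if both
  vectors vanish there, only the core contributes to the form.\<close>

lemma bform_core:
  assumes "6 \<le> n"
    and "\<And>i. n \<le> i \<Longrightarrow> i < 2*n - 6 \<Longrightarrow> u i = 0" "\<And>i. n \<le> i \<Longrightarrow> i < 2*n - 6 \<Longrightarrow> v i = 0"
  shows "bform n u v = (\<Sum>a<6. u a * v (dual_idx n a) + u (dual_idx n a) * v a)"
proof -
  have "u i * v (dual_idx n i) = 0" if "i \<in> {6..<2*n-6}" for i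
    using that assms by (cases "i < n") (auto simp: dual_idx_def)
  then have "(\<Sum>i\<in>{6..<2*n-6}. u i * v (dual_idx n i)) = 0" by (rule sum.neutral[OF ballI])
  then show ?thesis using bform_split[OF assms(1), of u v] by simp
qed

lemma bform_core_vec:
  assumes "6 \<le> n"
  shows "bform n (core_vec n xs ys) v = (\<Sum>a<6. xs ! a * v (dual_idx n a) + ys ! a * v a)"
proof -
  have "(\<Sum>i\<in>{6..<2*n-6}. core_vec n xs ys i * v (dual_idx n i)) = 0"
    by (intro sum.neutral) (auto simp: core_vec_mid)
  then show ?thesis using bform_split[OF assms, of "core_vec n xs ys" v] assms by simp
qed

lemma bform_core_vec_right:
  "6 \<le> n \<Longrightarrow> bform n v (core_vec n xs ys) = (\<Sum>a<6. xs ! a * v (dual_idx n a) + ys ! a * v a)"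
  using bform_core_vec[of n xs ys v] by (simp add: bform_sym)

section \<open>Subspaces cut out by conditions on the core coordinates\<close>

definition lin_cond :: "((nat \<Rightarrow> 'a::field) \<Rightarrow> bool) \<Rightarrow> bool" where
  "lin_cond P \<longleftrightarrow> P (\<lambda>_. 0) \<and> (\<forall>u v. P u \<longrightarrow> P v \<longrightarrow> P (\<lambda>i. u i + v i))
     \<and> (\<forall>c u. P u \<longrightarrow> P (\<lambda>i. c * u i))"

definition coord_space :: "nat \<Rightarrow> ((nat \<Rightarrow> 'a::field) \<Rightarrow> bool) \<Rightarrow> ((nat \<Rightarrow> 'a) \<Rightarrow> bool) \<Rightarrow> nat
    \<Rightarrow> (nat \<Rightarrow> 'a) set" where
  "coord_space n P Q p = {v \<in> vecs n. P v \<and> Q (\<lambda>a. v (dual_idx n a))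
     \<and> (\<forall>i. 6 + p \<le> i \<and> i < 2*n - 6 \<longrightarrow> v i = 0)}"

lemma lin_subspace_coord_space:
  "lin_cond P \<Longrightarrow> lin_cond Q \<Longrightarrow> lin_subspace (coord_space n P Q p)"
  unfolding lin_subspace_def coord_space_def lin_cond_def vecs_def by auto

lemma coord_space_vecs: "coord_space n P Q p \<subseteq> vecs n"
  unfolding coord_space_def by blast

lemma coord_space_mono: "p \<le> p' \<Longrightarrow> coord_space n P Q p \<subseteq> coord_space n P Q p'"
  unfolding coord_space_def by auto

lemma core_vec_mem_coord_space:
  "6 \<le> n \<Longrightarrow> P (core_vec n xs ys) \<Longrightarrow> Q (\<lambda>a. core_vec n xs ys (dual_idx n a))
    \<Longrightarrow> core_vec n xs ys \<in> coord_space n P Q p"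
  unfolding coord_space_def by (auto simp: core_vec_vecs core_vec_mid)

lemma coord_space_bform:
  assumes "6 + p \<le> n" "6 + p' \<le> n"
    and "u \<in> coord_space n P Q p" "v \<in> coord_space n P' Q' p'"
  shows "bform n u v = (\<Sum>a<6. u a * v (dual_idx n a) + u (dual_idx n a) * v a)"
  using assms by (intro bform_core) (auto simp: coord_space_def)

lemma coord_space_isotropic:
  assumes "6 + p \<le> n"
    and "\<And>u v. P u \<Longrightarrow> Q (\<lambda>a. u (dual_idx n a)) \<Longrightarrow> P v \<Longrightarrow> Q (\<lambda>a. v (dual_idx n a))
      \<Longrightarrow> (\<Sum>a<6. u a * v (dual_idx n a) + u (dual_idx n a) * v a) = 0"
  shows "isotropic n (coord_space n P Q p)"
  unfolding isotropic_def
proof (intro ballI)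
  fix u v assume u: "u \<in> coord_space n P Q p" and v: "v \<in> coord_space n P Q p"
  show "bform n u v = 0"
    using coord_space_bform[OF assms(1,1) u v] u v assms(2) by (simp add: coord_space_def)
qed

lemma coord_space_dim:
  fixes cs :: "(nat \<Rightarrow> 'a::field) list"
  assumes n: "6 + p \<le> n" and P: "lin_cond P" and Q: "lin_cond Q"
    and pad: "\<And>k. 6 \<le> k \<Longrightarrow> k < n \<Longrightarrow> P (unit_vec k) \<and> Q (\<lambda>a. unit_vec k (dual_idx n a))"
    and cs: "set cs \<subseteq> coord_space n P Q 0"
    and cp: "length cp = length cs" "set cp \<subseteq> {..<6} \<union> dual_idx n ` {..<6}"
    and piv: "\<And>j k. j < length cs \<Longrightarrow> k < length cs \<Longrightarrow> (cs ! j) (cp ! k) = (if j = k then 1 else 0)"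
    and det: "\<And>v. v \<in> coord_space n P Q p \<Longrightarrow> \<forall>q\<in>set cp. v q = 0
      \<Longrightarrow> \<forall>a<6. v a = 0 \<and> v (dual_idx n a) = 0"
  shows "subspace_dim n (coord_space n P Q p) (length cs + p)"
proof -
  let ?vs = "cs @ map unit_vec [6..<6+p]" and ?ps = "cp @ [6..<6+p]"
  have unit_mem: "unit_vec k \<in> coord_space n P Q p" if "6 \<le> k" "k < 6 + p" for k
    using that n pad[of k] by (auto simp: coord_space_def vecs_def unit_vec_def)
  have cs_mid: "(cs ! j) i = 0" if "j < length cs" "6 \<le> i" "i < n" for i j
  proof -
    have "cs ! j \<in> coord_space n P Q 0" using cs nth_mem[OF that(1)] by blast
    then show ?thesis using that n by (simp add: coord_space_def)
  qed
  have cp_core: "cp ! k < 6 \<or> n \<le> cp ! k" if "k < length cs" for k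
  proof -
    have "cp ! k \<in> set cp" using that cp(1) by simp
    then have "cp ! k \<in> {..<6} \<union> dual_idx n ` {..<6}" using cp(2) by blast
    then show ?thesis using n by (auto simp: dual_idx_def)
  qed
  have "subspace_dim n (coord_space n P Q p) (length ?vs)"
  proof (rule subspace_dim_pivots[OF lin_subspace_coord_space[OF P Q] coord_space_vecs])
    show "set ?vs \<subseteq> coord_space n P Q p"
      using cs coord_space_mono[of 0 p n P Q] unit_mem by auto
    show "length ?ps = length ?vs" using cp by simp
    show "(?vs ! j) (?ps ! k) = (if j = k then 1 else 0)" if "j < length ?vs" "k < length ?vs" for j k
      using that piv[of j k] cs_mid[of j "6 + (k - length cs)"] cp_core[of k] cp(1) n
      by (cases "j < length cs"; cases "k < length cs") (auto simp: nth_append unit_vec_def)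
    show "v = (\<lambda>_. 0)" if v: "v \<in> coord_space n P Q p" and z: "\<forall>q\<in>set ?ps. v q = 0" for v
    proof
      fix i
      have core: "\<forall>a<6. v a = 0 \<and> v (dual_idx n a) = 0" using det[OF v] z by simp
      show "v i = 0"
      proof (rule index_cases[of n i])
        show "6 \<le> n" using n by simp
      qed (use v z core in \<open>auto simp: coord_space_def vecs_def\<close>)
    qed
  qed
  then show ?thesis by simp
qed

section \<open>The family of triples\<close>

definition Lspace :: "nat \<Rightarrow> 'a \<Rightarrow> (nat \<Rightarrow> 'a::field) set" where
  "Lspace n r = coord_space n (\<lambda>x. x 0 = 0 \<and> x 4 = x 1 + x 2 + r * x 3 \<and> x 5 = x 1)
     (\<lambda>y. y 2 = - y 4 \<and> y 3 = - (r * y 4) \<and> y 1 = - y 4 - y 5) (n - 6)"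

definition Wspace :: "nat \<Rightarrow> nat \<Rightarrow> (nat \<Rightarrow> 'a::field) set" where
  "Wspace n \<beta> = coord_space n (\<lambda>x. x 0 = 0 \<and> x 1 = 0 \<and> x 2 = 0 \<and> x 3 = 0)
     (\<lambda>y. y 4 = 0 \<and> y 5 = 0 \<and> y 3 = - y 1 \<and> y 2 = - y 0 - y 1) (\<beta> - 4)"

text \<open>The span of \<open>e\<^sub>0, \<dots>, e\<^bsub>a-1\<^esub>\<close>, \<open>f\<^bsub>5-k\<^esub>, \<dots>, f\<^sub>5\<close> and the padding vectors \<open>e\<^sub>6, \<dots>, e\<^bsub>5+p\<^esub>\<close>.\<close>

definition Uspace :: "nat \<Rightarrow> nat \<Rightarrow> nat \<Rightarrow> nat \<Rightarrow> (nat \<Rightarrow> 'a::field) set" where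
  "Uspace n a k p = coord_space n (\<lambda>x. \<forall>b<6. a \<le> b \<longrightarrow> x b = 0) (\<lambda>y. \<forall>b<6. b + k < 5 \<longrightarrow> y b = 0) p"

lemma Lspace_dim:
  fixes r :: "'a::field"
  assumes n: "6 \<le> n"
  shows "subspace_dim n (Lspace n r) n"
proof -
  let ?o = "[0, 0, 0, 0, 0, 0] :: 'a list"
  let ?cs = "[core_vec n [0, 1, 0, 0, 1, 1] ?o, core_vec n [0, 0, 1, 0, 1, 0] ?o,
    core_vec n [0, 0, 0, 1, r, 0] ?o, core_vec n ?o [1, 0, 0, 0, 0, 0],
    core_vec n ?o [0, -1, -1, -r, 1, 0], core_vec n ?o [0, -1, 0, 0, 0, 1]]"
  let ?cp = "[1, 2, 3, dual_idx n 0, dual_idx n 4, dual_idx n 5]"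
  have "subspace_dim n (Lspace n r) (length ?cs + (n - 6))"
    unfolding Lspace_def
    apply (rule coord_space_dim[where cp = ?cp])
    subgoal using n by simp
    subgoal by (auto simp: lin_cond_def algebra_simps)
    subgoal by (auto simp: lin_cond_def ring_distribs; simp add: algebra_simps)
    subgoal using n by simp
    subgoal using n by (simp add: core_vec_mem_coord_space)
    subgoal by simp
    subgoal by auto
    subgoal for j k using less_6_cases[of j] less_6_cases[of k] n by (simp, elim disjE; simp)
    subgoal by (auto simp: coord_space_def dest!: less_6_cases)
    done
  moreover have "length ?cs + (n - 6) = n" using n by simp
  ultimately show ?thesis by simp
qed

lemma Lspace_isotropic: "6 \<le> n \<Longrightarrow> isotropic n (Lspace n r)"
  unfolding Lspace_def
  by (rule coord_space_isotropic) (auto simp: sum_lessThan_6 ring_distribs)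

lemma Lspace_flag: "6 \<le> n \<Longrightarrow> [Lspace n r] \<in> flags n [n]"
  unfolding flags_def using Lspace_dim[of n r] Lspace_isotropic[of n r] by simp

lemma Wspace_dim:
  assumes "4 \<le> \<beta>" "\<beta> + 2 \<le> n"
  shows "subspace_dim n (Wspace n \<beta> :: (nat \<Rightarrow> 'a::field) set) \<beta>"
proof -
  have n: "6 \<le> n" using assms by simp
  let ?o = "[0, 0, 0, 0, 0, 0] :: 'a list"
  let ?cs = "[core_vec n [0, 0, 0, 0, 1, 0] ?o, core_vec n [0, 0, 0, 0, 0, 1] ?o,
    core_vec n ?o [1, 0, -1, 0, 0, 0], core_vec n ?o [0, 1, -1, -1, 0, 0]]"
  let ?cp = "[4, 5, dual_idx n 0, dual_idx n 1]"
  have "subspace_dim n (Wspace n \<beta> :: (nat \<Rightarrow> 'a) set) (length ?cs + (\<beta> - 4))"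
    unfolding Wspace_def
    apply (rule coord_space_dim[where cp = ?cp])
    subgoal using assms by simp
    subgoal by (auto simp: lin_cond_def)
    subgoal by (auto simp: lin_cond_def ring_distribs; simp add: algebra_simps)
    subgoal using n by simp
    subgoal using n by (simp add: core_vec_mem_coord_space)
    subgoal by simp
    subgoal by auto
    subgoal for j k using less_4_cases[of j] less_4_cases[of k] n by (simp, elim disjE; simp)
    subgoal by (auto simp: coord_space_def dest!: less_6_cases)
    done
  moreover have "length ?cs + (\<beta> - 4) = \<beta>" using assms by simp
  ultimately show ?thesis by simp
qed

lemma Wspace_isotropic: "4 \<le> \<beta> \<Longrightarrow> \<beta> + 2 \<le> n \<Longrightarrow> isotropic n (Wspace n \<beta>)"
  unfolding Wspace_def
  by (rule coord_space_isotropic) (auto simp: sum_lessThan_6)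

lemma Wspace_flag: "4 \<le> \<beta> \<Longrightarrow> \<beta> + 2 \<le> n \<Longrightarrow> [Wspace n \<beta> :: (nat \<Rightarrow> 'a::field) set] \<in> flags n [\<beta>]"
  unfolding flags_def using Wspace_dim[of \<beta> n, where 'a = 'a] Wspace_isotropic[of \<beta> n] by simp

lemma Lspace_vecs: "Lspace n r \<subseteq> vecs n" and Wspace_vecs: "Wspace n \<beta> \<subseteq> vecs n"
  by (simp_all add: Lspace_def Wspace_def coord_space_vecs)

lemma Uspace_dim:
  assumes "a \<le> 6" "k \<le> 5" "6 + p \<le> n"
  shows "subspace_dim n (Uspace n a k p :: (nat \<Rightarrow> 'a::field) set) (a + (k + 1) + p)"
proof -
  let ?idx = "[0..<a] @ map (dual_idx n) [5 - k..<6]"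
  have "distinct (map (dual_idx n) [5 - k..<6])"
    using assms by (auto simp: distinct_map inj_on_def dual_idx_def)
  moreover have "set [0..<a] \<inter> set (map (dual_idx n) [5 - k..<6]) = {}"
    using assms by (auto simp: dual_idx_def)
  ultimately have dist: "distinct ?idx" by simp
  have "subspace_dim n (Uspace n a k p :: (nat \<Rightarrow> 'a) set)
      (length (map unit_vec ?idx :: (nat \<Rightarrow> 'a) list) + p)"
    unfolding Uspace_def
    apply (rule coord_space_dim[where cp = ?idx])
    subgoal using assms by simp
    subgoal by (auto simp: lin_cond_def)
    subgoal by (auto simp: lin_cond_def)
    subgoal using assms by (auto simp: unit_vec_def dual_idx_def)
    subgoal using assms by (auto simp: coord_space_def vecs_def unit_vec_def dual_idx_def)
    subgoal by simp
    subgoal using assms by auto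
    subgoal for j k' using nth_eq_iff_index_eq[OF dist, of k' j]
      by (simp only: length_map nth_map) (auto simp: unit_vec_def)
    subgoal by (auto simp: coord_space_def not_less)
    done
  then show ?thesis using assms by simp
qed

lemma Uspace_mono:
  "a \<le> a' \<Longrightarrow> k \<le> k' \<Longrightarrow> p \<le> p' \<Longrightarrow> Uspace n a k p \<subseteq> Uspace n a' k' p'"
  unfolding Uspace_def coord_space_def by auto

lemma Uspace_isotropic:
  assumes "a + k \<le> 5" "6 + p \<le> n"
  shows "isotropic n (Uspace n a k p)"
  unfolding Uspace_def
proof (rule coord_space_isotropic[OF assms(2)])
  fix u v :: "nat \<Rightarrow> 'a"
  assume "\<forall>b<6. a \<le> b \<longrightarrow> u b = 0" "\<forall>b<6. b + k < 5 \<longrightarrow> u (dual_idx n b) = 0"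
    and "\<forall>b<6. a \<le> b \<longrightarrow> v b = 0" "\<forall>b<6. b + k < 5 \<longrightarrow> v (dual_idx n b) = 0"
  then have "u b * v (dual_idx n b) + u (dual_idx n b) * v b = 0" if "b < 6" for b
    using that assms(1) by (cases "a \<le> b") auto
  then show "(\<Sum>b<6. u b * v (dual_idx n b) + u (dual_idx n b) * v b) = 0"
    by (intro sum.neutral ballI) simp
qed

lemma Lspace_dual_coords:
  "l \<in> Lspace n r \<Longrightarrow> l (dual_idx n 2) = - l (dual_idx n 4) \<and> l (dual_idx n 3) = - (r * l (dual_idx n 4))
    \<and> l (dual_idx n 1) = - l (dual_idx n 4) - l (dual_idx n 5)"
  unfolding Lspace_def coord_space_def by simp

lemma Wspace_coords:
  "w \<in> Wspace n \<beta> \<Longrightarrow> w 0 = 0 \<and> w 1 = 0 \<and> w 2 = 0 \<and> w 3 = 0 \<and> w (dual_idx n 4) = 0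
    \<and> w (dual_idx n 5) = 0 \<and> w (dual_idx n 3) = - w (dual_idx n 1)
    \<and> w (dual_idx n 2) = - w (dual_idx n 0) - w (dual_idx n 1)"
  unfolding Wspace_def coord_space_def by simp

lemma Uspace_coords:
  "u \<in> Uspace n a k p \<Longrightarrow> b < 6 \<Longrightarrow> (a \<le> b \<longrightarrow> u b = 0) \<and> (b + k < 5 \<longrightarrow> u (dual_idx n b) = 0)"
  unfolding Uspace_def coord_space_def by simp

lemma unit_vec_mem_Lspace: "6 \<le> k \<Longrightarrow> k < n \<Longrightarrow> unit_vec k \<in> Lspace n r"
  by (auto simp: Lspace_def coord_space_def vecs_def unit_vec_def dual_idx_def)

lemma zero_mem_Uspace: "(\<lambda>_. 0) \<in> Uspace n a k p"
  by (simp add: Uspace_def coord_space_def vecs_def)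

lemma zero_mem_Wspace: "(\<lambda>_. 0) \<in> Wspace n \<beta>"
  by (simp add: Wspace_def coord_space_def vecs_def)

locale composition4 =
  fixes g1 g2 g3 g4 n i j :: nat
  assumes pos: "0 < g1" "0 < g2" "0 < g3" "0 < g4" and sum: "g1 + g2 + g3 + g4 = n"
    and ij: "i < j" "j < 4" "2 \<le> [g1, g2, g3, g4] ! i" "2 \<le> [g1, g2, g3, g4] ! j"
begin

text \<open>Step \<open>k\<close> of the flag adds \<open>f\<^bsub>5-k\<^esub>\<close>, plus \<open>e\<^sub>0\<close> at step \<open>i\<close> and \<open>e\<^sub>1\<close> at step \<open>j\<close> (this is
  where \<open>\<gamma>\<^sub>i, \<gamma>\<^sub>j \<ge> 2\<close> is needed); padding vectors make up the dimension.\<close>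

definition xdim :: "nat \<Rightarrow> nat" where
  "xdim k = of_bool (i \<le> k) + of_bool (j \<le> k)"

definition padding :: "nat \<Rightarrow> nat" where
  "padding k = sum_list (take (Suc k) [g1, g2, g3, g4]) - (xdim k + k + 1)"

definition Zflag :: "(nat \<Rightarrow> 'a::field) set list" where
  "Zflag = map (\<lambda>k. Uspace n (xdim k) k (padding k)) [0..<4]"

lemma i_less_4: "i < 4" and j_less_4: "j < 4"
  using ij by simp_all

lemma xdim_le_2: "xdim k \<le> 2"
  by (simp add: xdim_def)

lemma xdim_3: "xdim 3 = 2" and xdim_i: "xdim i = 1"
  using ij by (simp_all add: xdim_def)

lemma padding_3: "padding 3 = n - 6"
  using ij sum by (simp add: padding_def xdim_def)

lemma padding_bound: "k < 4 \<Longrightarrow> xdim k + k + 1 \<le> sum_list (take (Suc k) [g1, g2, g3, g4]) \<and> 6 + padding k \<le> n"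
  unfolding padding_def xdim_def
  using less_4_cases[of k] less_4_cases[OF i_less_4] less_4_cases[OF j_less_4] ij pos sum
  by (elim disjE) auto

lemma padding_mono: "k < 3 \<Longrightarrow> padding k \<le> padding (Suc k)"
proof -
  assume "k < 3"
  then have "k = 0 \<or> k = 1 \<or> k = 2" by auto
  then show ?thesis
    unfolding padding_def xdim_def using less_4_cases[OF i_less_4] less_4_cases[OF j_less_4] ij pos
    by (elim disjE) auto
qed

lemma Zflag_flags: "(Zflag :: (nat \<Rightarrow> 'a::field) set list) \<in> flags n [g1, g2, g3, g4]"
  unfolding flags_def
proof (intro CollectI conjI allI impI)
  show "length (Zflag :: (nat \<Rightarrow> 'a) set list) = length [g1, g2, g3, g4]"
    by (simp add: Zflag_def)
  show "subspace_dim n ((Zflag :: (nat \<Rightarrow> 'a) set list) ! k) (sum_list (take (Suc k) [g1, g2, g3, g4]))"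
    if "k < length [g1, g2, g3, g4]" for k
  proof -
    have k: "k < 4" using that by simp
    have "subspace_dim n (Uspace n (xdim k) k (padding k) :: (nat \<Rightarrow> 'a) set) (xdim k + (k + 1) + padding k)"
      using padding_bound[OF k] k xdim_le_2[of k] by (intro Uspace_dim) auto
    moreover have "xdim k + (k + 1) + padding k = sum_list (take (Suc k) [g1, g2, g3, g4])"
      using padding_bound[OF k] unfolding padding_def by linarith
    ultimately show ?thesis using k by (simp add: Zflag_def)
  qed
  show "(Zflag :: (nat \<Rightarrow> 'a) set list) ! k \<subseteq> Zflag ! Suc k"
    if "Suc k < length [g1, g2, g3, g4]" for k
    using that padding_mono[of k] by (simp add: Zflag_def Uspace_mono xdim_def)
  have "isotropic n (Uspace n (xdim 3) 3 (padding 3) :: (nat \<Rightarrow> 'a) set)"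
    using padding_bound[of 3] by (intro Uspace_isotropic) (auto simp: xdim_3)
  then show "isotropic n (last (Zflag :: (nat \<Rightarrow> 'a) set list))"
    by (simp add: Zflag_def last_map)
qed

lemma Zflag_vecs: "\<forall>Y\<in>set Zflag. Y \<subseteq> vecs n" "length Zflag = 4"
  by (auto simp: Zflag_def Uspace_def coord_space_def)

end

section \<open>An orbit invariant\<close>

definition perp :: "nat \<Rightarrow> (nat \<Rightarrow> 'a::field) set \<Rightarrow> (nat \<Rightarrow> 'a) set" where
  "perp n X = {v \<in> vecs n. \<forall>u\<in>X. bform n v u = 0}"

definition subspace_sum :: "(nat \<Rightarrow> 'a::field) set \<Rightarrow> (nat \<Rightarrow> 'a) set \<Rightarrow> (nat \<Rightarrow> 'a) set" where
  "subspace_sum X Y = {(\<lambda>i. x i + y i) | x y. x \<in> X \<and> y \<in> Y}"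

lemma perp_vecs: "perp n X \<subseteq> vecs n"
  unfolding perp_def by blast

lemma subspace_sum_vecs: "X \<subseteq> vecs n \<Longrightarrow> Y \<subseteq> vecs n \<Longrightarrow> subspace_sum X Y \<subseteq> vecs n"
  unfolding subspace_sum_def vecs_def by (force simp: subset_iff)

lemma subspace_sumI: "x \<in> X \<Longrightarrow> y \<in> Y \<Longrightarrow> v = (\<lambda>i. x i + y i) \<Longrightarrow> v \<in> subspace_sum X Y"
  unfolding subspace_sum_def by blast

lemma perpD: "x \<in> perp n A \<Longrightarrow> u \<in> A \<Longrightarrow> bform n x u = 0"
  by (simp add: perp_def)

lemma Int_vecs: "A \<subseteq> vecs n \<Longrightarrow> A \<inter> B \<subseteq> vecs n"
  by blast

lemma perp_padding:
  assumes "x \<in> perp n A" "\<And>k. 6 \<le> k \<Longrightarrow> k < n \<Longrightarrow> unit_vec k \<in> A" "n \<le> i" "i < 2*n - 6"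
  shows "x i = 0"
proof -
  have "6 \<le> dual_idx n i" "dual_idx n i < n" using assms(3,4) by (auto simp: dual_idx_def)
  then have "bform n x (unit_vec (dual_idx n i)) = 0" using assms(1,2) by (simp add: perp_def)
  then show ?thesis using assms(3,4) by (simp add: bform_unit_vec)
qed

locale isometry =
  fixes n :: nat and g :: "(nat \<Rightarrow> 'a::field) \<Rightarrow> nat \<Rightarrow> 'a"
  assumes bij: "bij_betw g (vecs n) (vecs n)"
    and bform_eq: "\<And>u v. u \<in> vecs n \<Longrightarrow> v \<in> vecs n \<Longrightarrow> bform n (g u) (g v) = bform n u v"
    and additive: "g (\<lambda>i. x i + y i) = (\<lambda>i. g x i + g y i)"
begin

lemma image_perp:
  assumes "X \<subseteq> vecs n"
  shows "g ` perp n X = perp n (g ` X)"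
proof
  show "g ` perp n X \<subseteq> perp n (g ` X)"
    using assms bij bform_eq by (fastforce simp: perp_def bij_betw_def)
  show "perp n (g ` X) \<subseteq> g ` perp n X"
  proof
    fix w assume w: "w \<in> perp n (g ` X)"
    then obtain v where v: "v \<in> vecs n" "w = g v"
      using bij by (auto simp: perp_def bij_betw_def)
    have "bform n v u = 0" if "u \<in> X" for u
      using w v that assms bform_eq[of v u] by (auto simp: perp_def)
    then show "w \<in> g ` perp n X" using v by (auto simp: perp_def)
  qed
qed

lemma image_Int: "A \<subseteq> vecs n \<Longrightarrow> B \<subseteq> vecs n \<Longrightarrow> g ` (A \<inter> B) = g ` A \<inter> g ` B"
  using bij by (intro inj_on_image_Int) (auto simp: bij_betw_def)

lemma image_subspace_sum: "g ` subspace_sum A B = subspace_sum (g ` A) (g ` B)"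
proof
  show "g ` subspace_sum A B \<subseteq> subspace_sum (g ` A) (g ` B)"
  proof
    fix v assume "v \<in> g ` subspace_sum A B"
    then obtain x y where "x \<in> A" "y \<in> B" "v = (\<lambda>i. g x i + g y i)"
      unfolding subspace_sum_def by (auto simp: additive)
    then show "v \<in> subspace_sum (g ` A) (g ` B)" by (intro subspace_sumI) auto
  qed
  show "subspace_sum (g ` A) (g ` B) \<subseteq> g ` subspace_sum A B"
  proof
    fix v assume "v \<in> subspace_sum (g ` A) (g ` B)"
    then obtain x y where "x \<in> A" "y \<in> B" "v = g (\<lambda>i. x i + y i)"
      unfolding subspace_sum_def by (auto simp: additive)
    then show "v \<in> g ` subspace_sum A B" unfolding subspace_sum_def by blast
  qed
qed

end

lemma isometry_orth_group:
  assumes "g \<in> orth_group n"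
  shows "isometry n g"
proof -
  obtain M where g: "g = mat_act n M" and "bij_betw g (vecs n) (vecs n)"
    "\<forall>u\<in>vecs n. \<forall>v\<in>vecs n. bform n (g u) (g v) = bform n u v"
    using assms unfolding orth_group_def by blast
  then show ?thesis
    by unfold_locales (auto simp: g mat_act_def fun_eq_iff sum.distrib distrib_left)
qed

definition cross_ratios :: "nat \<Rightarrow> (nat \<Rightarrow> 'a::field) set \<Rightarrow> (nat \<Rightarrow> 'a) set
    \<Rightarrow> (nat \<Rightarrow> 'a) set list \<Rightarrow> nat \<Rightarrow> 'a set" where
  "cross_ratios n L W Z i =
    (let M = perp n W \<inter> Z ! 3;
         A1 = subspace_sum L W \<inter> M;
         A2 = M \<inter> subspace_sum (subspace_sum L (Z ! 0)) (W \<inter> perp n (Z ! i));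
         B1 = perp n W \<inter> Z ! 2;
         B2 = subspace_sum L (Z ! 1) \<inter> M
     in {t. \<exists>x1\<in>perp n A1. \<exists>x2\<in>perp n A2. \<exists>y1\<in>B1. \<exists>y2\<in>B2. bform n x1 y2 \<noteq> 0 \<and> bform n x2 y1 \<noteq> 0 \<and>
          bform n x1 y1 * bform n x2 y2 = t * (bform n x1 y2 * bform n x2 y1)})"

lemma (in isometry) image_cross_ratio_spaces:
  assumes "L \<subseteq> vecs n" "W \<subseteq> vecs n" "\<forall>Y\<in>set Z. Y \<subseteq> vecs n" "length Z = 4" "i < 4"
  shows "g ` perp n (subspace_sum L W \<inter> (perp n W \<inter> Z ! 3))
      = perp n (subspace_sum (g ` L) (g ` W) \<inter> (perp n (g ` W) \<inter> g ` (Z ! 3)))"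
    "g ` perp n ((perp n W \<inter> Z ! 3) \<inter> subspace_sum (subspace_sum L (Z ! 0)) (W \<inter> perp n (Z ! i)))
      = perp n ((perp n (g ` W) \<inter> g ` (Z ! 3))
          \<inter> subspace_sum (subspace_sum (g ` L) (g ` (Z ! 0))) (g ` W \<inter> perp n (g ` (Z ! i))))"
    "g ` (perp n W \<inter> Z ! 2) = perp n (g ` W) \<inter> g ` (Z ! 2)"
    "g ` (subspace_sum L (Z ! 1) \<inter> (perp n W \<inter> Z ! 3))
      = subspace_sum (g ` L) (g ` (Z ! 1)) \<inter> (perp n (g ` W) \<inter> g ` (Z ! 3))"
proof -
  have "Z ! k \<subseteq> vecs n" if "k < length Z" for k
    using assms(3) that by simp
  note image_simps = image_perp image_Int image_subspace_sum perp_vecs subspace_sum_vecs Int_vecs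
    assms(1,2,4,5) this
  show "g ` perp n (subspace_sum L W \<inter> (perp n W \<inter> Z ! 3))
      = perp n (subspace_sum (g ` L) (g ` W) \<inter> (perp n (g ` W) \<inter> g ` (Z ! 3)))"
    "g ` perp n ((perp n W \<inter> Z ! 3) \<inter> subspace_sum (subspace_sum L (Z ! 0)) (W \<inter> perp n (Z ! i)))
      = perp n ((perp n (g ` W) \<inter> g ` (Z ! 3))
          \<inter> subspace_sum (subspace_sum (g ` L) (g ` (Z ! 0))) (g ` W \<inter> perp n (g ` (Z ! i))))"
    "g ` (perp n W \<inter> Z ! 2) = perp n (g ` W) \<inter> g ` (Z ! 2)"
    "g ` (subspace_sum L (Z ! 1) \<inter> (perp n W \<inter> Z ! 3))
      = subspace_sum (g ` L) (g ` (Z ! 1)) \<inter> (perp n (g ` W) \<inter> g ` (Z ! 3))"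
    by (simp_all add: image_simps)
qed

lemma (in isometry) cross_ratios_image:
  assumes "L \<subseteq> vecs n" "W \<subseteq> vecs n" "\<forall>Y\<in>set Z. Y \<subseteq> vecs n" "length Z = 4" "i < 4"
  shows "cross_ratios n L W Z i \<subseteq> cross_ratios n (g ` L) (g ` W) (map ((`) g) Z) i"
proof
  fix t assume "t \<in> cross_ratios n L W Z i"
  then obtain x1 x2 y1 y2
    where x1: "x1 \<in> perp n (subspace_sum L W \<inter> (perp n W \<inter> Z ! 3))"
      and x2: "x2 \<in> perp n ((perp n W \<inter> Z ! 3) \<inter> subspace_sum (subspace_sum L (Z ! 0)) (W \<inter> perp n (Z ! i)))"
      and y1: "y1 \<in> perp n W \<inter> Z ! 2" and y2: "y2 \<in> subspace_sum L (Z ! 1) \<inter> (perp n W \<inter> Z ! 3)"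
      and t: "bform n x1 y2 \<noteq> 0" "bform n x2 y1 \<noteq> 0"
        "bform n x1 y1 * bform n x2 y2 = t * (bform n x1 y2 * bform n x2 y1)"
    unfolding cross_ratios_def Let_def by blast
  have "x1 \<in> vecs n" "x2 \<in> vecs n" "y1 \<in> vecs n" "y2 \<in> vecs n"
    using x1 x2 y1 y2 perp_vecs by blast+
  then have bf: "bform n (g x1) (g y1) = bform n x1 y1" "bform n (g x1) (g y2) = bform n x1 y2"
    "bform n (g x2) (g y1) = bform n x2 y1" "bform n (g x2) (g y2) = bform n x2 y2"
    by (simp_all add: bform_eq)
  have gZ: "map ((`) g) Z ! 0 = g ` (Z ! 0)" "map ((`) g) Z ! 1 = g ` (Z ! 1)"
    "map ((`) g) Z ! 2 = g ` (Z ! 2)" "map ((`) g) Z ! 3 = g ` (Z ! 3)" "map ((`) g) Z ! i = g ` (Z ! i)"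
    using assms(4,5) by simp_all
  show "t \<in> cross_ratios n (g ` L) (g ` W) (map ((`) g) Z) i"
    unfolding cross_ratios_def Let_def gZ image_cross_ratio_spaces[OF assms, symmetric] mem_Collect_eq
    using imageI[OF x1] imageI[OF x2] imageI[OF y1] imageI[OF y2] t bf
    by (intro bexI[of _ "g x1"] bexI[of _ "g x2"] bexI[of _ "g y1"] bexI[of _ "g y2"]) simp_all
qed

section \<open>The invariant on the family\<close>

context
  fixes n \<beta> :: nat
  assumes n: "6 \<le> n" and \<beta>: "4 \<le> \<beta>" "\<beta> + 2 \<le> n"
begin

lemma perp_Wspace_coords:
  assumes "v \<in> perp n (Wspace n \<beta>)"
  shows "v (dual_idx n 4) = 0 \<and> v (dual_idx n 5) = 0 \<and> v 0 = v 2 \<and> v 1 = v 2 + v 3"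
proof -
  let ?o = "[0, 0, 0, 0, 0, 0] :: 'a list"
  have B: "bform n v w = 0" if "w \<in> Wspace n \<beta>" for w
    using assms that by (simp add: perp_def)
  have "core_vec n [0, 0, 0, 0, 1, 0] ?o \<in> Wspace n \<beta>" "core_vec n [0, 0, 0, 0, 0, 1] ?o \<in> Wspace n \<beta>"
    "core_vec n ?o [1, 0, -1, 0, 0, 0] \<in> Wspace n \<beta>" "core_vec n ?o [0, 1, -1, -1, 0, 0] \<in> Wspace n \<beta>"
    unfolding Wspace_def using n by (simp_all add: core_vec_mem_coord_space)
  from B[OF this(1)] B[OF this(2)] B[OF this(3)] B[OF this(4)] show ?thesis
    using n by (simp add: bform_core_vec_right sum_lessThan_6 algebra_simps)
qed

lemma core_vec_perp_Wspace:
  assumes "ys ! 4 = 0" "ys ! 5 = 0"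
  shows "core_vec n [0, 0, 0, 0, 0, 0] ys \<in> perp n (Wspace n \<beta>)"
  unfolding perp_def
proof (intro CollectI conjI ballI)
  show "core_vec n [0, 0, 0, 0, 0, 0] ys \<in> vecs n" using n by (rule core_vec_vecs)
  fix w :: "nat \<Rightarrow> 'a" assume "w \<in> Wspace n \<beta>"
  then show "bform n (core_vec n [0, 0, 0, 0, 0, 0] ys) w = 0"
    using n assms Wspace_coords[of w] by (simp add: bform_core_vec sum_lessThan_6)
qed

lemma unit_vec_perp_Wspace:
  assumes "6 \<le> k" "k < n"
  shows "(unit_vec k :: nat \<Rightarrow> 'a::field) \<in> perp n (Wspace n \<beta>)"
proof -
  have "w (dual_idx n k) = 0" if "w \<in> Wspace n \<beta>" for w :: "nat \<Rightarrow> 'a"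
  proof -
    have "6 + (\<beta> - 4) \<le> dual_idx n k" "dual_idx n k < 2*n - 6"
      using assms \<beta> by (auto simp: dual_idx_def)
    then show ?thesis using that by (simp add: Wspace_def coord_space_def)
  qed
  then show ?thesis
    using assms by (auto simp: perp_def unit_vec_vecs bform_unit_vec_left)
qed

lemma M_coords:
  assumes "z \<in> perp n (Wspace n \<beta>) \<inter> Uspace n 2 3 (n - 6)"
  shows "(\<forall>a<6. z a = 0) \<and> z (dual_idx n 0) = 0 \<and> z (dual_idx n 1) = 0 \<and> z (dual_idx n 4) = 0
    \<and> z (dual_idx n 5) = 0 \<and> (\<forall>i. n \<le> i \<and> i < 2*n - 6 \<longrightarrow> z i = 0)"
proof -
  have "z b = 0" if "2 \<le> b" "b < 6" for b
    using assms Uspace_coords[of z n 2 3 "n - 6"] that by auto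
  moreover have "z (dual_idx n 0) = 0" "z (dual_idx n 1) = 0"
    using assms Uspace_coords[of z n 2 3 "n - 6"] by auto
  moreover have "z i = 0" if "n \<le> i" "i < 2*n - 6" for i
    using assms that by (auto simp: Uspace_def coord_space_def)
  ultimately show ?thesis
    using perp_Wspace_coords[of z] assms by (auto dest!: less_6_cases)
qed

lemma B1_coords:
  assumes "z \<in> perp n (Wspace n \<beta>) \<inter> Uspace n a2 2 p2" "a2 \<le> 2" "6 + p2 \<le> n"
  shows "(\<forall>a<6. z a = 0) \<and> (\<forall>c<6. c \<noteq> 3 \<longrightarrow> z (dual_idx n c) = 0)
    \<and> (\<forall>i. n \<le> i \<and> i < 2*n - 6 \<longrightarrow> z i = 0)"
proof -
  have "z b = 0" if "2 \<le> b" "b < 6" for b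
    using assms Uspace_coords[of z n a2 2 p2 b] that by auto
  moreover have "z (dual_idx n c) = 0" if "c < 3" for c
    using assms Uspace_coords[of z n a2 2 p2 c] that by auto
  moreover have "z i = 0" if "n \<le> i" "i < 2*n - 6" for i
    using assms that by (auto simp: Uspace_def coord_space_def)
  ultimately show ?thesis
    using perp_Wspace_coords[of z] assms(1) by (auto dest!: less_6_cases)
qed

lemma A1_dual_3:
  assumes "z \<in> subspace_sum (Lspace n r) (Wspace n \<beta>) \<inter> (perp n (Wspace n \<beta>) \<inter> Uspace n 2 3 (n - 6))"
  shows "z (dual_idx n 3) = 0"
proof -
  obtain l w where l: "l \<in> Lspace n r" and w: "w \<in> Wspace n \<beta>" and z: "z = (\<lambda>i. l i + w i)"
    using assms unfolding subspace_sum_def by blast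
  have "z (dual_idx n 1) = 0" "z (dual_idx n 4) = 0" "z (dual_idx n 5) = 0"
    using M_coords[of z] assms by auto
  then show ?thesis
    using Lspace_dual_coords[OF l] Wspace_coords[OF w] unfolding z by simp
qed

lemma B2_dual_23:
  assumes "z \<in> subspace_sum (Lspace n r) (Uspace n a1 1 p1) \<inter> (perp n (Wspace n \<beta>) \<inter> Uspace n 2 3 (n - 6))"
  shows "z (dual_idx n 3) = r * z (dual_idx n 2)"
proof -
  obtain l u where l: "l \<in> Lspace n r" and u: "u \<in> Uspace n a1 1 p1" and z: "z = (\<lambda>i. l i + u i)"
    using assms unfolding subspace_sum_def by blast
  have "u (dual_idx n 2) = 0" "u (dual_idx n 3) = 0"
    using Uspace_coords[OF u, of 2] Uspace_coords[OF u, of 3] by auto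
  moreover have "z (dual_idx n 4) = 0" using M_coords[of z] assms by auto
  ultimately show ?thesis
    using Lspace_dual_coords[OF l] unfolding z by (simp add: eq_neg_iff_add_eq_0[symmetric])
qed

lemma A2_dual_23:
  assumes "z \<in> (perp n (Wspace n \<beta>) \<inter> Uspace n 2 3 (n - 6))
      \<inter> subspace_sum (subspace_sum (Lspace n r) (Uspace n a0 0 p0)) (Wspace n \<beta> \<inter> perp n Ui)"
    and "unit_vec 0 \<in> Ui"
  shows "z (dual_idx n 2) = z (dual_idx n 3)"
proof -
  obtain l u w where l: "l \<in> Lspace n r" and u: "u \<in> Uspace n a0 0 p0"
    and w: "w \<in> Wspace n \<beta>" "w \<in> perp n Ui" and z: "z = (\<lambda>i. l i + u i + w i)"
    using assms(1) unfolding subspace_sum_def by blast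
  have "u (dual_idx n 2) = 0" "u (dual_idx n 3) = 0" "u (dual_idx n 4) = 0"
    using Uspace_coords[OF u, of 2] Uspace_coords[OF u, of 3] Uspace_coords[OF u, of 4] by auto
  moreover have "w (dual_idx n 0) = 0"
  proof -
    have "bform n w (unit_vec 0) = 0" using w(2) assms(2) by (simp add: perp_def)
    then show ?thesis using n by (simp add: bform_unit_vec)
  qed
  moreover have "z (dual_idx n 4) = 0" using M_coords[of z] assms(1) by auto
  ultimately show ?thesis
    using Lspace_dual_coords[OF l] Wspace_coords[OF w(1)] unfolding z by simp
qed

lemma core_vec_mem_M:
  assumes "length ys = 6" "ys ! 0 = 0" "ys ! 1 = 0" "ys ! 4 = 0" "ys ! 5 = 0"
  shows "core_vec n [0, 0, 0, 0, 0, 0] ys \<in> perp n (Wspace n \<beta>) \<inter> Uspace n 2 3 (n - 6)"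
proof
  show "core_vec n [0, 0, 0, 0, 0, 0] ys \<in> perp n (Wspace n \<beta>)"
    using n \<beta> assms by (intro core_vec_perp_Wspace) simp_all
  show "core_vec n [0, 0, 0, 0, 0, 0] ys \<in> Uspace n 2 3 (n - 6)"
    unfolding Uspace_def using n assms
    by (intro core_vec_mem_coord_space) (auto dest!: less_6_cases)
qed

lemma unit_vec_mem_M:
  assumes "6 \<le> k" "k < n"
  shows "unit_vec k \<in> perp n (Wspace n \<beta>) \<inter> Uspace n 2 3 (n - 6)"
proof
  show "unit_vec k \<in> perp n (Wspace n \<beta>)" using assms by (rule unit_vec_perp_Wspace)
  show "unit_vec k \<in> Uspace n 2 3 (n - 6)"
    using n assms by (auto simp: Uspace_def coord_space_def vecs_def unit_vec_def dual_idx_def)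
qed

lemma B1_mem:
  assumes "a2 \<le> 2" "6 + p2 \<le> n"
  shows "core_vec n [0, 0, 0, 0, 0, 0] [0, 0, 0, 1, 0, 0] \<in> perp n (Wspace n \<beta>) \<inter> Uspace n a2 2 p2"
proof
  show "core_vec n [0, 0, 0, 0, 0, 0] [0, 0, 0, 1, 0, 0] \<in> perp n (Wspace n \<beta>)"
    using n \<beta> by (intro core_vec_perp_Wspace) simp_all
  show "core_vec n [0, 0, 0, 0, 0, 0] [0, 0, 0, 1, 0, 0] \<in> Uspace n a2 2 p2"
    unfolding Uspace_def using n by (intro core_vec_mem_coord_space) (auto dest!: less_6_cases)
qed

lemma B2_mem:
  "core_vec n [0, 0, 0, 0, 0, 0] [0, 0, 1, r, 0, 0]
    \<in> subspace_sum (Lspace n r) (Uspace n a1 1 p1) \<inter> (perp n (Wspace n \<beta>) \<inter> Uspace n 2 3 (n - 6))"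
proof
  let ?o = "[0, 0, 0, 0, 0, 0]"
  have "core_vec n ?o [0, 0, 1, r, -1, 1] \<in> Lspace n r"
    unfolding Lspace_def using n by (intro core_vec_mem_coord_space) simp_all
  moreover have "core_vec n ?o [0, 0, 0, 0, 1, -1] \<in> Uspace n a1 1 p1"
    unfolding Uspace_def using n by (intro core_vec_mem_coord_space) (auto dest!: less_6_cases)
  ultimately show "core_vec n ?o [0, 0, 1, r, 0, 0] \<in> subspace_sum (Lspace n r) (Uspace n a1 1 p1)"
    by (rule subspace_sumI) (simp add: core_vec_add)
  show "core_vec n ?o [0, 0, 1, r, 0, 0] \<in> perp n (Wspace n \<beta>) \<inter> Uspace n 2 3 (n - 6)"
    by (rule core_vec_mem_M) simp_all
qed

lemma A1_mem:
  "core_vec n [0, 0, 0, 0, 0, 0] [0, 0, 1, 0, 0, 0]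
    \<in> subspace_sum (Lspace n r) (Wspace n \<beta>) \<inter> (perp n (Wspace n \<beta>) \<inter> Uspace n 2 3 (n - 6))"
  "6 \<le> k \<Longrightarrow> k < n
    \<Longrightarrow> unit_vec k \<in> subspace_sum (Lspace n r) (Wspace n \<beta>) \<inter> (perp n (Wspace n \<beta>) \<inter> Uspace n 2 3 (n - 6))"
proof -
  let ?o = "[0, 0, 0, 0, 0, 0]"
  have "core_vec n ?o [1, 0, 0, 0, 0, 0] \<in> Lspace n r"
    unfolding Lspace_def using n by (intro core_vec_mem_coord_space) simp_all
  moreover have "core_vec n ?o [-1, 0, 1, 0, 0, 0] \<in> Wspace n \<beta>"
    unfolding Wspace_def using n by (intro core_vec_mem_coord_space) simp_all
  ultimately have "core_vec n ?o [0, 0, 1, 0, 0, 0] \<in> subspace_sum (Lspace n r) (Wspace n \<beta>)"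
    by (rule subspace_sumI) (simp add: core_vec_add)
  then show "core_vec n ?o [0, 0, 1, 0, 0, 0]
    \<in> subspace_sum (Lspace n r) (Wspace n \<beta>) \<inter> (perp n (Wspace n \<beta>) \<inter> Uspace n 2 3 (n - 6))"
    using core_vec_mem_M[of "[0, 0, 1, 0, 0, 0]"] by simp
  assume k: "6 \<le> k" "k < n"
  have "unit_vec k \<in> subspace_sum (Lspace n r) (Wspace n \<beta>)"
    using unit_vec_mem_Lspace[OF k] zero_mem_Wspace by (rule subspace_sumI) simp
  then show "unit_vec k
    \<in> subspace_sum (Lspace n r) (Wspace n \<beta>) \<inter> (perp n (Wspace n \<beta>) \<inter> Uspace n 2 3 (n - 6))"
    using unit_vec_mem_M[OF k] by simp
qed

lemma A2_mem:
  assumes "\<forall>u\<in>Ui. u 1 = 0 \<and> u 2 = 0 \<and> u 3 = 0"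
  shows "core_vec n [0, 0, 0, 0, 0, 0] [0, 0, 1, 1, 0, 0] \<in> (perp n (Wspace n \<beta>) \<inter> Uspace n 2 3 (n - 6))
      \<inter> subspace_sum (subspace_sum (Lspace n r) (Uspace n a0 0 p0)) (Wspace n \<beta> \<inter> perp n Ui)"
    "6 \<le> k \<Longrightarrow> k < n \<Longrightarrow> unit_vec k \<in> (perp n (Wspace n \<beta>) \<inter> Uspace n 2 3 (n - 6))
      \<inter> subspace_sum (subspace_sum (Lspace n r) (Uspace n a0 0 p0)) (Wspace n \<beta> \<inter> perp n Ui)"
proof -
  let ?o = "[0, 0, 0, 0, 0, 0]"
  have "core_vec n ?o [0, 1, 0, 0, 0, -1] \<in> Lspace n r"
    unfolding Lspace_def using n by (intro core_vec_mem_coord_space) simp_all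
  moreover have "core_vec n ?o [0, 0, 0, 0, 0, 1] \<in> Uspace n a0 0 p0"
    unfolding Uspace_def using n by (intro core_vec_mem_coord_space) (auto dest!: less_6_cases)
  ultimately have LU: "core_vec n ?o [0, 1, 0, 0, 0, 0] \<in> subspace_sum (Lspace n r) (Uspace n a0 0 p0)"
    by (rule subspace_sumI) (simp add: core_vec_add)
  have "core_vec n ?o [0, -1, 1, 1, 0, 0] \<in> Wspace n \<beta>"
    unfolding Wspace_def using n by (intro core_vec_mem_coord_space) simp_all
  moreover have "core_vec n ?o [0, -1, 1, 1, 0, 0] \<in> perp n Ui"
    using n assms by (auto simp: perp_def core_vec_vecs bform_core_vec sum_lessThan_6)
  ultimately have "core_vec n ?o [0, 0, 1, 1, 0, 0]
      \<in> subspace_sum (subspace_sum (Lspace n r) (Uspace n a0 0 p0)) (Wspace n \<beta> \<inter> perp n Ui)"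
    using LU by (intro subspace_sumI[OF LU]) (auto simp: core_vec_add)
  then show "core_vec n ?o [0, 0, 1, 1, 0, 0] \<in> (perp n (Wspace n \<beta>) \<inter> Uspace n 2 3 (n - 6))
      \<inter> subspace_sum (subspace_sum (Lspace n r) (Uspace n a0 0 p0)) (Wspace n \<beta> \<inter> perp n Ui)"
    using core_vec_mem_M[of "[0, 0, 1, 1, 0, 0]"] by simp
  assume k: "6 \<le> k" "k < n"
  have "(\<lambda>_. 0) \<in> Wspace n \<beta> \<inter> perp n Ui"
    by (simp add: zero_mem_Wspace perp_def vecs_def bform_def)
  then have "unit_vec k \<in> subspace_sum (subspace_sum (Lspace n r) (Uspace n a0 0 p0)) (Wspace n \<beta> \<inter> perp n Ui)"
    by (intro subspace_sumI[where y = "\<lambda>_. 0"] subspace_sumI[OF unit_vec_mem_Lspace[OF k]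
        zero_mem_Uspace]) auto
  then show "unit_vec k \<in> (perp n (Wspace n \<beta>) \<inter> Uspace n 2 3 (n - 6))
      \<inter> subspace_sum (subspace_sum (Lspace n r) (Uspace n a0 0 p0)) (Wspace n \<beta> \<inter> perp n Ui)"
    using unit_vec_mem_M[OF k] by simp
qed

lemma bform_M:
  assumes "\<forall>i. n \<le> i \<and> i < 2*n - 6 \<longrightarrow> x i = 0" "\<forall>i. n \<le> i \<and> i < 2*n - 6 \<longrightarrow> y i = 0"
    and "\<forall>a<6. y a = 0" "y (dual_idx n 0) = 0" "y (dual_idx n 1) = 0" "y (dual_idx n 4) = 0"
      "y (dual_idx n 5) = 0"
  shows "bform n x y = x 2 * y (dual_idx n 2) + x 3 * y (dual_idx n 3)"
  using assms by (subst bform_core[OF n]) (simp_all add: sum_lessThan_6)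

lemma perp_A1_coords:
  assumes "x \<in> perp n (subspace_sum (Lspace n r) (Wspace n \<beta>) \<inter> (perp n (Wspace n \<beta>) \<inter> Uspace n 2 3 (n - 6)))"
  shows "x 2 = 0 \<and> (\<forall>i. n \<le> i \<and> i < 2*n - 6 \<longrightarrow> x i = 0)"
proof -
  have "bform n x (core_vec n [0, 0, 0, 0, 0, 0] [0, 0, 1, 0, 0, 0]) = 0"
    using perpD[OF assms A1_mem(1)] .
  then show ?thesis
    using n perp_padding[OF assms A1_mem(2)] by (simp add: bform_core_vec_right sum_lessThan_6)
qed

lemma perp_A2_coords:
  assumes "\<forall>u\<in>Ui. u 1 = 0 \<and> u 2 = 0 \<and> u 3 = 0"
    and "x \<in> perp n ((perp n (Wspace n \<beta>) \<inter> Uspace n 2 3 (n - 6))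
      \<inter> subspace_sum (subspace_sum (Lspace n r) (Uspace n a0 0 p0)) (Wspace n \<beta> \<inter> perp n Ui))"
  shows "x 2 = - x 3 \<and> (\<forall>i. n \<le> i \<and> i < 2*n - 6 \<longrightarrow> x i = 0)"
proof -
  have "bform n x (core_vec n [0, 0, 0, 0, 0, 0] [0, 0, 1, 1, 0, 0]) = 0"
    using perpD[OF assms(2) A2_mem(1)[OF assms(1)]] .
  then show ?thesis
    using n perp_padding[OF assms(2) A2_mem(2)[OF assms(1)]]
    by (simp add: bform_core_vec_right sum_lessThan_6 eq_neg_iff_add_eq_0)
qed

end

context
  fixes n \<beta> i :: nat and a p :: "nat \<Rightarrow> nat" and Z :: "(nat \<Rightarrow> 'a::field) set list"
  assumes n: "6 \<le> n" and \<beta>: "4 \<le> \<beta>" "\<beta> + 2 \<le> n"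
    and Z: "Z = map (\<lambda>k. Uspace n (a k) k (p k)) [0..<4]"
    and Z2: "a 2 \<le> 2" "6 + p 2 \<le> n" and Z3: "a 3 = 2" "p 3 = n - 6"
    and i: "i < 4" "a i = 1"
begin

lemma Z_nth: "k < 4 \<Longrightarrow> Z ! k = Uspace n (a k) k (p k)"
  by (simp add: Z)

lemma Z_0123: "Z ! 0 = Uspace n (a 0) 0 (p 0)" "Z ! 1 = Uspace n (a 1) 1 (p 1)"
  "Z ! 2 = Uspace n (a 2) 2 (p 2)" "Z ! 3 = Uspace n 2 3 (n - 6)"
  using Z_nth[of 0] Z_nth[of 1] Z_nth[of 2] Z_nth[of 3] Z3 by simp_all

lemma Z_i: "unit_vec 0 \<in> Z ! i" "\<forall>u\<in>Z ! i. u 1 = 0 \<and> u 2 = 0 \<and> u 3 = 0"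
  using Z_nth[OF i(1)] i(2) n
  by (auto simp: Uspace_def coord_space_def vecs_def unit_vec_def dual_idx_def)

lemma cross_ratios_family_mem:
  fixes r :: 'a
  assumes r: "r \<noteq> 0"
  shows "(r - 1) / r \<in> cross_ratios n (Lspace n r) (Wspace n \<beta>) Z i"
proof -
  let ?o = "[0, 0, 0, 0, 0, 0] :: 'a list"
  let ?x1 = "core_vec n [0, 0, 0, 1, 0, 0] ?o" and ?x2 = "core_vec n [0, 0, 1, -1, 0, 0] ?o"
  let ?y1 = "core_vec n ?o [0, 0, 0, 1, 0, 0]" and ?y2 = "core_vec n ?o [0, 0, 1, r, 0, 0]"
  have "?x1 \<in> perp n (subspace_sum (Lspace n r) (Wspace n \<beta>)
      \<inter> (perp n (Wspace n \<beta>) \<inter> Uspace n 2 3 (n - 6)))"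
    using n \<beta> A1_dual_3 by (auto simp: perp_def core_vec_vecs bform_core_vec sum_lessThan_6)
  moreover have "?x2 \<in> perp n ((perp n (Wspace n \<beta>) \<inter> Uspace n 2 3 (n - 6))
      \<inter> subspace_sum (subspace_sum (Lspace n r) (Uspace n (a 0) 0 (p 0))) (Wspace n \<beta> \<inter> perp n (Z ! i)))"
    using n \<beta> A2_dual_23[OF n \<beta> _ Z_i(1)]
    by (auto simp: perp_def core_vec_vecs bform_core_vec sum_lessThan_6)
  moreover have "?y1 \<in> perp n (Wspace n \<beta>) \<inter> Uspace n (a 2) 2 (p 2)"
    using B1_mem[OF n \<beta> Z2] .
  moreover have "?y2 \<in> subspace_sum (Lspace n r) (Uspace n (a 1) 1 (p 1))
      \<inter> (perp n (Wspace n \<beta>) \<inter> Uspace n 2 3 (n - 6))"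
    using B2_mem[OF n \<beta>] .
  moreover have "bform n ?x1 ?y2 \<noteq> 0 \<and> bform n ?x2 ?y1 \<noteq> 0
      \<and> bform n ?x1 ?y1 * bform n ?x2 ?y2 = (r - 1) / r * (bform n ?x1 ?y2 * bform n ?x2 ?y1)"
  proof -
    have vals: "bform n ?x1 ?y1 = 1" "bform n ?x1 ?y2 = r" "bform n ?x2 ?y1 = -1" "bform n ?x2 ?y2 = 1 - r"
      using n by (simp_all add: bform_core_vec sum_lessThan_6)
    show ?thesis unfolding vals using r by (simp add: field_simps)
  qed
  ultimately show ?thesis
    unfolding cross_ratios_def Let_def Z_0123 by blast
qed

lemma cross_ratios_family_unique:
  fixes s t :: 'a
  assumes s: "s \<noteq> 0" and t: "t \<in> cross_ratios n (Lspace n s) (Wspace n \<beta>) Z i"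
  shows "t = (s - 1) / s"
proof -
  obtain x1 x2 y1 y2
    where x1: "x1 \<in> perp n (subspace_sum (Lspace n s) (Wspace n \<beta>)
        \<inter> (perp n (Wspace n \<beta>) \<inter> Uspace n 2 3 (n - 6)))"
      and x2: "x2 \<in> perp n ((perp n (Wspace n \<beta>) \<inter> Uspace n 2 3 (n - 6))
        \<inter> subspace_sum (subspace_sum (Lspace n s) (Uspace n (a 0) 0 (p 0))) (Wspace n \<beta> \<inter> perp n (Z ! i)))"
      and y1: "y1 \<in> perp n (Wspace n \<beta>) \<inter> Uspace n (a 2) 2 (p 2)"
      and y2: "y2 \<in> subspace_sum (Lspace n s) (Uspace n (a 1) 1 (p 1))
        \<inter> (perp n (Wspace n \<beta>) \<inter> Uspace n 2 3 (n - 6))"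
      and nz: "bform n x1 y2 \<noteq> 0" "bform n x2 y1 \<noteq> 0"
      and eq: "bform n x1 y1 * bform n x2 y2 = t * (bform n x1 y2 * bform n x2 y1)"
    using t unfolding cross_ratios_def Let_def Z_0123 by blast
  have x12: "x1 2 = 0" and x22: "x2 2 = - x2 3"
    and pad: "\<forall>i. n \<le> i \<and> i < 2*n - 6 \<longrightarrow> x1 i = 0" "\<forall>i. n \<le> i \<and> i < 2*n - 6 \<longrightarrow> x2 i = 0"
    using perp_A1_coords[OF n \<beta> x1] perp_A2_coords[OF n \<beta> Z_i(2) x2] by simp_all
  have Y1: "(\<forall>a<6. y1 a = 0) \<and> (\<forall>c<6. c \<noteq> 3 \<longrightarrow> y1 (dual_idx n c) = 0)
      \<and> (\<forall>i. n \<le> i \<and> i < 2*n - 6 \<longrightarrow> y1 i = 0)"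
    using B1_coords[OF n \<beta> y1 Z2] .
  have Y2: "(\<forall>a<6. y2 a = 0) \<and> y2 (dual_idx n 0) = 0 \<and> y2 (dual_idx n 1) = 0 \<and> y2 (dual_idx n 4) = 0
      \<and> y2 (dual_idx n 5) = 0 \<and> (\<forall>i. n \<le> i \<and> i < 2*n - 6 \<longrightarrow> y2 i = 0)"
    using M_coords[OF n \<beta>] y2 by blast
  have y23: "y2 (dual_idx n 3) = s * y2 (dual_idx n 2)"
    using B2_dual_23[OF n \<beta> y2] .
  have B: "bform n x1 y1 = x1 3 * y1 (dual_idx n 3)" "bform n x2 y1 = x2 3 * y1 (dual_idx n 3)"
    using bform_M[OF n \<beta> pad(1)] bform_M[OF n \<beta> pad(2)] Y1 x22 by simp_all
  have B': "bform n x1 y2 = x1 3 * s * y2 (dual_idx n 2)"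
    "bform n x2 y2 = x2 3 * (s - 1) * y2 (dual_idx n 2)"
    using bform_M[OF n \<beta> pad(1)] bform_M[OF n \<beta> pad(2)] Y2 y23 x12 x22 by (simp_all add: algebra_simps)
  define K where "K = x1 3 * y2 (dual_idx n 2) * x2 3 * y1 (dual_idx n 3)"
  have "K \<noteq> 0" using nz unfolding B B' K_def by simp
  moreover have "K * (t * s) = K * (s - 1)" using eq unfolding B B' K_def by algebra
  ultimately have "t * s = s - 1" by simp
  then show ?thesis using s by (simp add: field_simps)
qed

lemma cross_ratios_family:
  "r \<noteq> 0 \<Longrightarrow> cross_ratios n (Lspace n r) (Wspace n \<beta>) Z i = {(r - 1) / r}"
  using cross_ratios_family_mem cross_ratios_family_unique by blast

end

lemma (in composition4) cross_ratios_Zflag: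
  assumes "4 \<le> \<beta>" "\<beta> + 2 \<le> n" "r \<noteq> 0"
  shows "cross_ratios n (Lspace n r) (Wspace n \<beta>) Zflag i = {(r - 1) / r}"
  using assms padding_bound[of 2] padding_3 xdim_le_2 xdim_3 xdim_i i_less_4
  by (intro cross_ratios_family[where a = xdim and p = padding]) (auto simp: Zflag_def)

section \<open>Infinitely many orbits\<close>

definition triple_act :: "((nat \<Rightarrow> 'a) \<Rightarrow> nat \<Rightarrow> 'a)
    \<Rightarrow> (nat \<Rightarrow> 'a) set list \<times> (nat \<Rightarrow> 'a) set list \<times> (nat \<Rightarrow> 'a) set list
    \<Rightarrow> (nat \<Rightarrow> 'a) set list \<times> (nat \<Rightarrow> 'a) set list \<times> (nat \<Rightarrow> 'a) set list" where
  "triple_act g = (\<lambda>(X, Y, Z). (flag_act g X, flag_act g Y, flag_act g Z))"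

lemma identity_mem_orth_group: "\<exists>g\<in>orth_group n. \<forall>v\<in>vecs n. g v = (v :: nat \<Rightarrow> 'a::field)"
proof -
  define g :: "(nat \<Rightarrow> 'a) \<Rightarrow> nat \<Rightarrow> 'a" where "g = mat_act n (\<lambda>i j. of_bool (i = j))"
  have g_id: "g v = v" if "v \<in> vecs n" for v
  proof
    fix i
    have "(\<Sum>j<2*n. of_bool (i = j) * v j) = (\<Sum>j<2*n. if i = j then v j else 0)"
      by (intro sum.cong) auto
    then show "g v i = v i"
      using that by (simp add: g_def mat_act_def vecs_def)
  qed
  have "bij_betw g (vecs n) (vecs n) \<longleftrightarrow> bij_betw (id :: (nat \<Rightarrow> 'a) \<Rightarrow> _) (vecs n) (vecs n)"
    by (rule bij_betw_cong) (simp add: g_id)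
  then have "bij_betw g (vecs n) (vecs n)" by simp
  moreover have "\<forall>u\<in>vecs n. \<forall>v\<in>vecs n. bform n (g u) (g v) = bform n u v"
    by (simp add: g_id)
  ultimately have "g \<in> orth_group n"
    unfolding orth_group_def using g_def by blast
  then show ?thesis using g_id by blast
qed

lemma triple_act_id:
  assumes "T \<in> triple_space n a b c" "\<forall>v\<in>vecs n. g v = v"
  shows "triple_act g T = T"
proof -
  have "flag_act g Vs = Vs" if "Vs \<in> flags n d" for Vs d
  proof -
    have "V \<subseteq> vecs n" if "V \<in> set Vs" for V
      using that \<open>Vs \<in> flags n d\<close> subspace_dim_subset
      by (fastforce simp: flags_def in_set_conv_nth)
    then show ?thesis
      using assms(2) by (auto simp: flag_act_def intro!: map_idI) (auto simp: image_iff subset_iff)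
  qed
  then show ?thesis using assms(1) by (auto simp: triple_space_def triple_act_def)
qed

lemma infinite_triple_orbits:
  fixes fam :: "'b \<Rightarrow> (nat \<Rightarrow> 'a::field) set list \<times> (nat \<Rightarrow> 'a) set list \<times> (nat \<Rightarrow> 'a) set list"
  assumes S: "infinite S" and fam: "fam ` S \<subseteq> triple_space n a b c"
    and \<Phi>: "\<And>r. r \<in> S \<Longrightarrow> \<Phi> (fam r) = {\<phi> r}" and \<phi>: "inj_on \<phi> S"
    and inv: "\<And>r g. r \<in> S \<Longrightarrow> g \<in> orth_group n \<Longrightarrow> \<Phi> (fam r) \<subseteq> \<Phi> (triple_act g (fam r))"
  shows "infinite (triple_orbits n a b c :: ((nat \<Rightarrow> 'a) set list \<times> _) set set)"
proof -
  define orbit :: "(nat \<Rightarrow> 'a) set list \<times> (nat \<Rightarrow> 'a) set list \<times> (nat \<Rightarrow> 'a) set list \<Rightarrow> _"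
    where "orbit T = (\<lambda>g. triple_act g T) ` orth_group n" for T
  have "triple_orbits n a b c = orbit ` triple_space n a b c"
    unfolding triple_orbits_def orbit_def triple_act_def
    by (rule image_cong[OF refl]) (simp split: prod.split)
  then have sub: "(orbit \<circ> fam) ` S \<subseteq> triple_orbits n a b c"
    using fam by (auto simp: image_subset_iff)
  obtain g0 :: "(nat \<Rightarrow> 'a) \<Rightarrow> nat \<Rightarrow> 'a" where g0: "g0 \<in> orth_group n" "\<forall>v\<in>vecs n. g0 v = v"
    using identity_mem_orth_group by blast
  have "inj_on (orbit \<circ> fam) S"
  proof (rule inj_onI)
    fix r s assume r: "r \<in> S" and s: "s \<in> S" and eq: "(orbit \<circ> fam) r = (orbit \<circ> fam) s"
    have "fam s \<in> triple_space n a b c" using fam s by blast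
    then have "triple_act g0 (fam s) = fam s" by (rule triple_act_id[OF _ g0(2)])
    then have "fam s \<in> orbit (fam s)"
      unfolding orbit_def using g0(1) by (rule image_eqI[OF sym])
    then have "fam s \<in> orbit (fam r)" using eq by simp
    then obtain g where g: "g \<in> orth_group n" "fam s = triple_act g (fam r)"
      unfolding orbit_def by blast
    have "{\<phi> r} \<subseteq> {\<phi> s}" using inv[OF r g(1)] unfolding \<Phi>[OF r] g(2)[symmetric] \<Phi>[OF s] .
    then have "\<phi> r = \<phi> s" by simp
    then show "r = s" using inj_onD[OF \<phi> _ r s] by blast
  qed
  then have "infinite ((orbit \<circ> fam) ` S)" using S finite_imageD by blast
  then show ?thesis using finite_subset[OF sub] by blast
qed

text \<open>The construction works in every characteristic.\<close>
theorem proposition3p17: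
  fixes n \<beta> \<gamma>1 \<gamma>2 \<gamma>3 \<gamma>4 :: nat
  assumes "infinite (UNIV :: 'a::field set)"
    and "(2::'a) \<noteq> 0"
    and "4 \<le> \<beta>" and "\<beta> + 2 \<le> n"
    and "0 < \<gamma>1" "0 < \<gamma>2" "0 < \<gamma>3" "0 < \<gamma>4"
    and "\<gamma>1 + \<gamma>2 + \<gamma>3 + \<gamma>4 = n"
    and "\<exists>i j. i < j \<and> j < 4 \<and> 2 \<le> [\<gamma>1, \<gamma>2, \<gamma>3, \<gamma>4] ! i \<and> 2 \<le> [\<gamma>1, \<gamma>2, \<gamma>3, \<gamma>4] ! j"
  shows "infinite (triple_orbits n [n] [\<beta>] [\<gamma>1, \<gamma>2, \<gamma>3, \<gamma>4] :: ((nat \<Rightarrow> 'a) set list \<times> _) set set)"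
proof -
  obtain i j where "i < j" "j < 4" "2 \<le> [\<gamma>1, \<gamma>2, \<gamma>3, \<gamma>4] ! i" "2 \<le> [\<gamma>1, \<gamma>2, \<gamma>3, \<gamma>4] ! j"
    using assms(10) by blast
  then interpret composition4 \<gamma>1 \<gamma>2 \<gamma>3 \<gamma>4 n i j
    using assms(5-9) by unfold_locales
  have n: "6 \<le> n" using assms(3,4) by simp
  define fam where "fam r = ([Lspace n r], [Wspace n \<beta> :: (nat \<Rightarrow> 'a) set], Zflag :: (nat \<Rightarrow> 'a) set list)"
    for r :: 'a
  show ?thesis
  proof (rule infinite_triple_orbits[where S = "UNIV - {0}" and fam = fam and \<phi> = "\<lambda>r. (r - 1) / r"
        and \<Phi> = "\<lambda>(X, Y, Z). cross_ratios n (hd X) (hd Y) Z i"])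
    show "infinite (UNIV - {0 :: 'a})" using assms(1) by (rule infinite_remove)
    show "fam ` (UNIV - {0}) \<subseteq> triple_space n [n] [\<beta>] [\<gamma>1, \<gamma>2, \<gamma>3, \<gamma>4]"
      using Lspace_flag[OF n] Wspace_flag[OF assms(3,4)] Zflag_flags by (auto simp: fam_def triple_space_def)
    show "inj_on (\<lambda>r. (r - 1) / r) (UNIV - {0 :: 'a})"
      by (rule inj_onI) (simp add: field_simps)
    show "(\<lambda>(X, Y, Z). cross_ratios n (hd X) (hd Y) Z i) (fam r) = {(r - 1) / r}" if "r \<in> UNIV - {0}" for r
      unfolding fam_def using cross_ratios_Zflag[OF assms(3,4)] that by simp
    show "(\<lambda>(X, Y, Z). cross_ratios n (hd X) (hd Y) Z i) (fam r)
        \<subseteq> (\<lambda>(X, Y, Z). cross_ratios n (hd X) (hd Y) Z i) (triple_act g (fam r))"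
      if "g \<in> orth_group n" for r g
      using isometry.cross_ratios_image[OF isometry_orth_group[OF that] Lspace_vecs Wspace_vecs Zflag_vecs i_less_4]
      unfolding fam_def triple_act_def flag_act_def by simp
  qed
qed

end
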